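(* Let $\mathbb I\subseteq\mathbb R$ be a time interval, $\mathcal X\subseteq\mathbb R^n$, $\mathcal S=\mathbb I\times\mathcal X$, and consider a pHDAE $$E\dot x + r = (J-R)z + (B-P)u,\qquad y = (B+P)^Tz + (S-N)u$$ (all coefficients evaluated at $(t,x)$) with Hamiltonian $\mathcal H$, as defined in the context. Let $\tilde{\mathcal X}\subseteq\mathbb R^{\tilde n}$, $\tilde{\mathcal S}:=\mathbb I\times\tilde{\mathcal X}$, let $\varphi\in C^1(\tilde{\mathcal S},\mathcal X)$ be such that $\tilde x\mapsto\varphi(t,\tilde x)$ is a local diffeomorphism, and let $U\in C(\tilde{\mathcal S},\mathbb R^{\ell,\ell})$ be pointwise invertible. For a function $F$ on $\mathcal S$ write $(F\circ\varphi)(t,\tilde x)=F(t,\varphi(t,\tilde x))$. Define $\tilde E=U^T(E\circ\varphi)\partial_{\tilde x}\varphi$, $\tilde J=U^T(J\circ\varphi)U$, $\tilde R=U^T(R\circ\varphi)U$, $\tilde B=U^T(B\circ\varphi)$, $\tilde P=U^T(P\circ\varphi)$, $\tilde z=U^{-1}(z\circ\varphi)$, $\tilde r=U^T\big(r\circ\varphi+(E\circ\varphi)\partial_t\varphi\big)$, and $\tilde{\mathcal H}:=\mathcal H\circ\varphi$, and consider the input-output DAE $$\tilde E\dot{\tilde x}+\tilde r=(\tilde J-\tilde R)\tilde z+(\tilde B-\tilde P)u,\qquad y=(\tilde B+\tilde P)^T\tilde z+(S\circ\varphi-N\circ\varphi)u.$$ Then this transformed system is a pHDAE with Hamiltonian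 $\tilde{\mathcal H}$, and to any solution $(\tilde x,u,y)$ of the transformed system corresponds a solution $(x,u,y)$ of the original system with $x(t)=\varphi(t,\tilde x(t))$. Furthermore, if $\varphi(t,\cdot)$ is a global diffeomorphism for every $t\in\mathbb I$, then the two systems are equivalent (their solutions correspond one-to-one via $x(t)=\varphi(t,\tilde x(t))$).
   Context: A pHDAE on $\mathcal S=\mathbb I\times\mathcal X$ is a system $E(t,x)\dot x + r(t,x) = (J(t,x)-R(t,x))z(t,x) + (B(t,x)-P(t,x))u$, $y = (B(t,x)+P(t,x))^Tz(t,x) + (S(t,x)-N(t,x))u$, with state $x(t)\in\mathcal X$, input/output $u(t),y(t)\in\mathbb R^m$, continuous coefficient functions $E:\mathcal S\to\mathbb R^{\ell,n}$, $r,z:\mathcal S\to\mathbb R^\ell$, $J,R:\mathcal S\to\mathbb R^{\ell,\ell}$, $B,P:\mathcal S\to\mathbb R^{\ell,m}$, $S,N:\mathcal S\to\mathbb R^{m,m}$, and a Hamiltonian $\mathcal H\in C^1(\mathcal S,\mathbb R)$, such that pointwise: (1) $\Gamma:=\begin{bmatrix} J & B\\ -B^T & N\end{bmatrix}$ satisfies $\Gamma=-\Gamma^T$ and $W:=\begin{bmatrix} R & P\\ P^T & S\end{bmatrix}$ satisfies $W=W^T\ge0$; (2) $\partial_x\mathcal H=E^Tz$ and $\partial_t\mathcal H=z^Tr$. For the transformed system the same definition applies with state space $\tilde{\mathcal X}$, coefficients $\tilde E,\tilde r,\tilde z,\tilde J,\tilde R,\tilde B,\tilde P,S\circ\varphi,N\circ\varphi$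 and Hamiltonian $\tilde{\mathcal H}$. *)

theory Defs
  imports "HOL-Analysis.Analysis"
begin

definition block_mat ::
  "real^'b^'a \<Rightarrow> real^'d^'a \<Rightarrow> real^'b^'c \<Rightarrow> real^'d^'c \<Rightarrow> real^('b+'d)^('a+'c)" where
  "block_mat A B C D = (\<chi> i j. case i of
      Inl a \<Rightarrow> (case j of Inl b \<Rightarrow> A$a$b | Inr d \<Rightarrow> B$a$d)
    | Inr c \<Rightarrow> (case j of Inl b \<Rightarrow> C$c$b | Inr d \<Rightarrow> D$c$d))"

definition psd_mat :: "real^'k^'k \<Rightarrow> bool" where
  "psd_mat M \<longleftrightarrow> (\<forall>v. 0 \<le> v \<bullet> (M *v v))"

definition C1_on :: "('a::euclidean_space \<Rightarrow> 'b::euclidean_space) \<Rightarrow> 'a set \<Rightarrow> bool" where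
  "C1_on f A \<longleftrightarrow> (\<exists>f'. (\<forall>v\<in>A. (f has_derivative blinfun_apply (f' v)) (at v)) \<and> continuous_on A f')"

definition local_diffeo_on :: "('a::euclidean_space \<Rightarrow> 'b::euclidean_space) \<Rightarrow> 'a set \<Rightarrow> 'b set \<Rightarrow> bool" where
  "local_diffeo_on f A B \<longleftrightarrow> f ` A \<subseteq> B \<and>
     (\<forall>x\<in>A. \<exists>V W g. open V \<and> x \<in> V \<and> V \<subseteq> A \<and> open W \<and> f ` V = W \<and>
        (\<forall>v\<in>V. g (f v) = v) \<and> (\<forall>w\<in>W. f (g w) = w) \<and> C1_on f V \<and> C1_on g W)"

definition diffeo_on :: "('a::euclidean_space \<Rightarrow> 'b::euclidean_space) \<Rightarrow> 'a set \<Rightarrow> 'b set \<Rightarrow> bool" where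
  "diffeo_on f A B \<longleftrightarrow> bij_betw f A B \<and> C1_on f A \<and> C1_on (inv_into A f) B"

definition pHDAE ::
  "real set \<Rightarrow> (real^'n) set \<Rightarrow>
   (real \<Rightarrow> real^'n \<Rightarrow> real^'n^'l) \<Rightarrow> (real \<Rightarrow> real^'n \<Rightarrow> real^'l) \<Rightarrow> (real \<Rightarrow> real^'n \<Rightarrow> real^'l) \<Rightarrow>
   (real \<Rightarrow> real^'n \<Rightarrow> real^'l^'l) \<Rightarrow> (real \<Rightarrow> real^'n \<Rightarrow> real^'l^'l) \<Rightarrow>
   (real \<Rightarrow> real^'n \<Rightarrow> real^'m^'l) \<Rightarrow> (real \<Rightarrow> real^'n \<Rightarrow> real^'m^'l) \<Rightarrow>
   (real \<Rightarrow> real^'n \<Rightarrow> real^'m^'m) \<Rightarrow> (real \<Rightarrow> real^'n \<Rightarrow> real^'m^'m) \<Rightarrow>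
   (real \<Rightarrow> real^'n \<Rightarrow> real) \<Rightarrow> bool" where
  "pHDAE I X E r z J R B P S N H \<longleftrightarrow>
     continuous_on (I \<times> X) (case_prod E) \<and> continuous_on (I \<times> X) (case_prod r) \<and>
     continuous_on (I \<times> X) (case_prod z) \<and> continuous_on (I \<times> X) (case_prod J) \<and>
     continuous_on (I \<times> X) (case_prod R) \<and> continuous_on (I \<times> X) (case_prod B) \<and>
     continuous_on (I \<times> X) (case_prod P) \<and> continuous_on (I \<times> X) (case_prod S) \<and>
     continuous_on (I \<times> X) (case_prod N) \<and>
     (\<forall>t\<in>I. \<forall>x\<in>X.
        (let \<Gamma> = block_mat (J t x) (B t x) (- transpose (B t x)) (N t x);
             W = block_mat (R t x) (P t x) (transpose (P t x)) (S t x)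
         in transpose \<Gamma> = - \<Gamma> \<and> transpose W = W \<and> psd_mat W) \<and>
        (case_prod H has_derivative
           (\<lambda>(dt, dx). dt * (z t x \<bullet> r t x) + (transpose (E t x) *v z t x) \<bullet> dx))
          (at (t, x) within I \<times> X))"

definition is_solution ::
  "real set \<Rightarrow> (real^'n) set \<Rightarrow>
   (real \<Rightarrow> real^'n \<Rightarrow> real^'n^'l) \<Rightarrow> (real \<Rightarrow> real^'n \<Rightarrow> real^'l) \<Rightarrow> (real \<Rightarrow> real^'n \<Rightarrow> real^'l) \<Rightarrow>
   (real \<Rightarrow> real^'n \<Rightarrow> real^'l^'l) \<Rightarrow> (real \<Rightarrow> real^'n \<Rightarrow> real^'l^'l) \<Rightarrow>
   (real \<Rightarrow> real^'n \<Rightarrow> real^'m^'l) \<Rightarrow> (real \<Rightarrow> real^'n \<Rightarrow> real^'m^'l) \<Rightarrow>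
   (real \<Rightarrow> real^'n \<Rightarrow> real^'m^'m) \<Rightarrow> (real \<Rightarrow> real^'n \<Rightarrow> real^'m^'m) \<Rightarrow>
   (real \<Rightarrow> real^'n) \<Rightarrow> (real \<Rightarrow> real^'m) \<Rightarrow> (real \<Rightarrow> real^'m) \<Rightarrow> bool" where
  "is_solution I X E r z J R B P S N x u y \<longleftrightarrow>
     (\<exists>x'. \<forall>t\<in>I. x t \<in> X \<and> (x has_vector_derivative x' t) (at t within I) \<and>
        E t (x t) *v x' t + r t (x t) = (J t (x t) - R t (x t)) *v z t (x t) + (B t (x t) - P t (x t)) *v u t \<and>
        y t = transpose (B t (x t) + P t (x t)) *v z t (x t) + (S t (x t) - N t (x t)) *v u t)"

end

theory Submission
  imports Defs
begin

text \<open>The transformation is the composite of two simpler ones. The change of state variables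
  \<open>x = \<phi>(t, x\<^sub>t)\<close> turns \<open>E x'\<close> into \<open>E (\<partial>\<^sub>t \<phi> + \<partial>\<^sub>x \<phi> x\<^sub>t')\<close>, which is absorbed into the new
  \<open>E\<close> and \<open>r\<close>, and the chain rule for \<open>H \<circ> \<phi>\<close> yields exactly the gradient conditions for them.
  Multiplying the equation by \<open>U\<^sup>T\<close> and substituting \<open>z = U z\<^sub>t\<close> is a congruence by \<open>diag(U, 1)\<close> on
  \<open>\<Gamma>\<close> and \<open>W\<close>, which preserves skew-symmetry and semidefiniteness and leaves \<open>z\<^sup>T r\<close> and \<open>E\<^sup>T z\<close>
  unchanged; it maps solutions to solutions in both directions. The state change maps solutions
  forward by the chain rule. Backwards, for bijective \<open>\<phi>(t, \<cdot>)\<close>, the preimage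
  \<open>x\<^sub>t(t) = \<phi>(t, \<cdot>)\<^sup>-\<^sup>1(x(t))\<close> has to be shown differentiable: a simplified Newton iteration with the
  invertible Jacobian \<open>\<partial>\<^sub>x \<phi>\<close> shows that \<open>x\<^sub>t\<close> is Lipschitz at every \<open>t\<close>, and then differentiating
  \<open>\<phi>(t, x\<^sub>t(t)) = x(t)\<close> gives \<open>x\<^sub>t' = (\<partial>\<^sub>x \<phi>)\<^sup>-\<^sup>1 (x' - \<partial>\<^sub>t \<phi>)\<close>.\<close>

section \<open>Congruence transformations\<close>

definition vec_Inl :: "real^('a::finite + 'b::finite) \<Rightarrow> real^'a" where
  "vec_Inl v = (\<chi> i. v $ Inl i)"

definition vec_Inr :: "real^('a::finite + 'b::finite) \<Rightarrow> real^'b" where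
  "vec_Inr v = (\<chi> j. v $ Inr j)"

definition vec_case :: "real^'a::finite \<Rightarrow> real^'b::finite \<Rightarrow> real^('a + 'b)" where
  "vec_case a b = (\<chi> k. case_sum (($) a) (($) b) k)"

lemma vec_Inl_vec_case [simp]: "vec_Inl (vec_case a b) = a"
  and vec_Inr_vec_case [simp]: "vec_Inr (vec_case a b) = b"
  by (simp_all add: vec_Inl_def vec_Inr_def vec_case_def)

lemma inner_block_mat_mult:
  fixes A :: "real^'a^'a" and B :: "real^'c^'a" and C :: "real^'a^'c" and D :: "real^'c^'c"
  shows "v \<bullet> (block_mat A B C D *v v) =
    vec_Inl v \<bullet> (A *v vec_Inl v + B *v vec_Inr v) + vec_Inr v \<bullet> (C *v vec_Inl v + D *v vec_Inr v)"
proof -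
  have sum_Plus: "sum g (UNIV :: ('a + 'c) set) = (\<Sum>i\<in>UNIV. g (Inl i)) + (\<Sum>j\<in>UNIV. g (Inr j))" for g
    by (simp add: sum.Plus flip: UNIV_Plus_UNIV)
  show ?thesis
    by (simp add: inner_vec_def matrix_vector_mult_def block_mat_def sum_Plus vec_Inl_def vec_Inr_def
        sum_distrib_left algebra_simps)
qed

lemma block_mat_eq_iff:
  "block_mat A B C D = block_mat A' B' C' D' \<longleftrightarrow> A = A' \<and> B = B' \<and> C = C' \<and> D = D'"
proof
  assume eq: "block_mat A B C D = block_mat A' B' C' D'"
  have entry: "block_mat A B C D $ i $ j = block_mat A' B' C' D' $ i $ j" for i j
    using eq by simp
  show "A = A' \<and> B = B' \<and> C = C' \<and> D = D'"
    using entry[of "Inl _" "Inl _"] entry[of "Inl _" "Inr _"] entry[of "Inr _" "Inl _"] entry[of "Inr _" "Inr _"]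
    by (simp add: block_mat_def vec_eq_iff)
qed simp

lemma transpose_block_mat:
  "transpose (block_mat A B C D) = block_mat (transpose A) (transpose C) (transpose B) (transpose D)"
  by (auto simp: block_mat_def vec_eq_iff transpose_def split: sum.splits)

lemma uminus_block_mat: "- block_mat A B C D = block_mat (- A) (- B) (- C) (- D)"
  by (auto simp: block_mat_def vec_eq_iff split: sum.splits)

lemma transpose_uminus [simp]: "transpose (- A) = - transpose (A :: real^'n^'m)"
  by (simp add: transpose_def vec_eq_iff)

lemma matrix_mul_uminus_left: "(- A :: real^'n^'m) ** B = - (A ** B)"
  and matrix_mul_uminus_right: "(A :: real^'n^'m) ** (- B) = - (A ** B)"
  by (simp_all add: matrix_matrix_mult_def vec_eq_iff sum_negf)

lemma inner_transpose_mult: "(x :: real^'n) \<bullet> (transpose M *v y) = (M *v x) \<bullet> y"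
  by (metis dot_lmul_matrix inner_commute transpose_matrix_vector)

lemma inner_vector_matrix_mult: "(a :: real^'n) \<bullet> (w v* U) = (U *v a) \<bullet> w"
  by (metis dot_lmul_matrix inner_commute)

lemma skew_block_congruence:
  fixes U J :: "real^'l^'l" and B :: "real^'m^'l" and N :: "real^'m^'m"
  assumes "transpose (block_mat J B (- transpose B) N) = - block_mat J B (- transpose B) N"
  shows "transpose (block_mat (transpose U ** J ** U) (transpose U ** B) (- transpose (transpose U ** B)) N)
       = - block_mat (transpose U ** J ** U) (transpose U ** B) (- transpose (transpose U ** B)) N"
proof -
  from assms have J: "transpose J = - J" and N: "transpose N = - N"
    by (simp_all add: transpose_block_mat uminus_block_mat block_mat_eq_iff)
  have "transpose (transpose U ** J ** U) = - (transpose U ** J ** U)"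
    by (simp add: matrix_transpose_mul J matrix_mul_assoc matrix_mul_uminus_left matrix_mul_uminus_right)
  then show ?thesis
    by (simp add: transpose_block_mat uminus_block_mat block_mat_eq_iff N)
qed

lemma symmetric_block_congruence:
  fixes U R :: "real^'l^'l" and P :: "real^'m^'l" and S :: "real^'m^'m"
  assumes "transpose (block_mat R P (transpose P) S) = block_mat R P (transpose P) S"
  shows "transpose (block_mat (transpose U ** R ** U) (transpose U ** P) (transpose (transpose U ** P)) S)
       = block_mat (transpose U ** R ** U) (transpose U ** P) (transpose (transpose U ** P)) S"
proof -
  from assms have "transpose R = R" and "transpose S = S"
    by (simp_all add: transpose_block_mat block_mat_eq_iff)
  then show ?thesis
    by (simp add: transpose_block_mat block_mat_eq_iff matrix_transpose_mul matrix_mul_assoc)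
qed

text \<open>The congruence by \<open>diag(U, 1)\<close>: the quadratic form at \<open>v\<close> is the original one at
  \<open>(U a, b)\<close>, where \<open>a\<close> and \<open>b\<close> are the two parts of \<open>v\<close>.\<close>
lemma psd_block_congruence:
  fixes U R :: "real^'l^'l" and P :: "real^'m^'l" and S :: "real^'m^'m"
  assumes "psd_mat (block_mat R P (transpose P) S)"
  shows "psd_mat (block_mat (transpose U ** R ** U) (transpose U ** P) (transpose (transpose U ** P)) S)"
  unfolding psd_mat_def
proof
  fix v :: "real^('l + 'm)"
  let ?w = "vec_case (U *v vec_Inl v) (vec_Inr v)"
  have "0 \<le> ?w \<bullet> (block_mat R P (transpose P) S *v ?w)"
    using assms unfolding psd_mat_def by blast
  also have "\<dots> = v \<bullet> (block_mat (transpose U ** R ** U) (transpose U ** P) (transpose (transpose U ** P)) S *v v)"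
    unfolding inner_block_mat_mult
    by (simp add: matrix_transpose_mul inner_transpose_mult matrix_vector_mul_assoc[symmetric]
        inner_vector_matrix_mult flip: matrix_vector_right_distrib vector_matrix_left_distrib)
  finally show "0 \<le> v \<bullet> (block_mat (transpose U ** R ** U) (transpose U ** P) (transpose (transpose U ** P)) S *v v)" .
qed

lemma pH_structure_congruence:
  fixes U J R :: "real^'l^'l" and B P :: "real^'m^'l" and S N :: "real^'m^'m"
  assumes "let \<Gamma> = block_mat J B (- transpose B) N; W = block_mat R P (transpose P) S
      in transpose \<Gamma> = - \<Gamma> \<and> transpose W = W \<and> psd_mat W"
  shows "let \<Gamma> = block_mat (transpose U ** J ** U) (transpose U ** B) (- transpose (transpose U ** B)) N;
      W = block_mat (transpose U ** R ** U) (transpose U ** P) (transpose (transpose U ** P)) S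
      in transpose \<Gamma> = - \<Gamma> \<and> transpose W = W \<and> psd_mat W"
  using assms unfolding Let_def
  by (elim conjE, intro conjI skew_block_congruence symmetric_block_congruence psd_block_congruence)

lemma matrix_inv_right: "invertible A \<Longrightarrow> A ** matrix_inv A = mat 1"
  and matrix_inv_left: "invertible A \<Longrightarrow> matrix_inv A ** A = mat 1"
  unfolding invertible_def matrix_inv_def by (metis (mono_tags, lifting) someI_ex)+

lemma matrix_inv_cancel_right: "invertible A \<Longrightarrow> A *v (matrix_inv A *v v) = v"
  by (simp add: matrix_vector_mul_assoc matrix_inv_right)

lemma matrix_inv_cancel_left: "invertible A \<Longrightarrow> matrix_inv A *v (A *v v) = v"
  by (simp add: matrix_vector_mul_assoc matrix_inv_left)

lemma inner_matrix_inv_transpose: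
  fixes U :: "real^'n^'n"
  assumes "invertible U"
  shows "(matrix_inv U *v z) \<bullet> (transpose U *v w) = z \<bullet> w"
  by (simp only: inner_transpose_mult matrix_inv_cancel_right[OF assms])

lemma transpose_congruence_matrix_inv:
  fixes U :: "real^'l^'l" and E :: "real^'n^'l"
  shows "invertible U \<Longrightarrow> transpose (transpose U ** E) *v (matrix_inv U *v z) = transpose E *v z"
  by (simp only: matrix_transpose_mul transpose_transpose matrix_vector_mul_assoc[symmetric]
      matrix_inv_cancel_right)

lemma congruence_dae_iff:
  fixes U J R :: "real^'l^'l" and E :: "real^'n^'l" and B P :: "real^'m^'l"
  assumes U: "invertible U"
  shows "(transpose U ** E) *v w + transpose U *v r =
      (transpose U ** J ** U - transpose U ** R ** U) *v (matrix_inv U *v z)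
        + (transpose U ** B - transpose U ** P) *v u
    \<longleftrightarrow> E *v w + r = (J - R) *v z + (B - P) *v u"
proof -
  have rhs: "(transpose U ** J ** U - transpose U ** R ** U) *v (matrix_inv U *v z)
        + (transpose U ** B - transpose U ** P) *v u
      = transpose U *v ((J - R) *v z + (B - P) *v u)"
    by (simp only: matrix_vector_mul_assoc[symmetric] matrix_vector_right_distrib
        matrix_vector_mult_diff_distrib matrix_vector_mult_diff_rdistrib matrix_inv_cancel_right[OF U])
  have lhs: "(transpose U ** E) *v w + transpose U *v r = transpose U *v (E *v w + r)"
    by (simp only: matrix_vector_mul_assoc[symmetric] matrix_vector_right_distrib)
  have "inj ((*v) (transpose U))"
    using inj_matrix_vector_mult transpose_invertible[OF U] by blast
  then show ?thesis unfolding lhs rhs by (simp only: inj_eq)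
qed

lemma continuous_on_matrix_mult [continuous_intros]:
  fixes f :: "'a::topological_space \<Rightarrow> real^'n^'m" and g :: "'a \<Rightarrow> real^'k^'n"
  shows "continuous_on S f \<Longrightarrow> continuous_on S g \<Longrightarrow> continuous_on S (\<lambda>x. f x ** g x)"
  unfolding matrix_matrix_mult_def by (intro continuous_intros)

lemma continuous_on_matrix_vector_mult [continuous_intros]:
  fixes f :: "'a::topological_space \<Rightarrow> real^'n^'m" and g :: "'a \<Rightarrow> real^'n"
  shows "continuous_on S f \<Longrightarrow> continuous_on S g \<Longrightarrow> continuous_on S (\<lambda>x. f x *v g x)"
  unfolding matrix_vector_mult_def by (intro continuous_intros)

lemma continuous_on_transpose [continuous_intros]:
  fixes f :: "'a::topological_space \<Rightarrow> real^'n^'m"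
  shows "continuous_on S f \<Longrightarrow> continuous_on S (\<lambda>x. transpose (f x))"
  unfolding transpose_def by (intro continuous_intros)

lemma continuous_on_det [continuous_intros]:
  fixes f :: "'a::topological_space \<Rightarrow> real^'n^'n"
  shows "continuous_on S f \<Longrightarrow> continuous_on S (\<lambda>x. det (f x))"
  unfolding det_def by (intro continuous_intros)

lemma matrix_inv_mult_cramer:
  fixes A :: "real^'n^'n"
  assumes "invertible A"
  shows "matrix_inv A *v b = (\<chi> k. det (\<chi> i j. if j = k then b $ i else A $ i $ j) / det A)"
  using cramer[OF invertible_det_nz[THEN iffD1, OF assms]] matrix_inv_cancel_right[OF assms] by blast

lemma continuous_on_matrix_inv_mult:
  fixes f :: "'a::topological_space \<Rightarrow> real^'n^'n" and g :: "'a \<Rightarrow> real^'n"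
  assumes f: "continuous_on S f" and g: "continuous_on S g" and inv: "\<And>x. x \<in> S \<Longrightarrow> invertible (f x)"
  shows "continuous_on S (\<lambda>x. matrix_inv (f x) *v g x)"
proof -
  have entry: "continuous_on S (\<lambda>x. if j = k then g x $ i else f x $ i $ j)" for i j k :: 'n
    by (cases "j = k") (simp_all add: continuous_intros f g)
  have "continuous_on S (\<lambda>x. \<chi> k. det (\<chi> i j. if j = k then g x $ i else f x $ i $ j) / det (f x))"
    using inv invertible_det_nz by (intro continuous_intros entry f) blast
  then show ?thesis
    by (rule continuous_on_cong[THEN iffD1, rotated 2]) (auto simp: matrix_inv_mult_cramer inv)
qed

lemma pHDAE_congruence:
  fixes U :: "real \<Rightarrow> real^'n \<Rightarrow> real^'l^'l"
  assumes ph: "pHDAE I X E r z J R B P S N H"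
    and U_cont: "continuous_on (I \<times> X) (case_prod U)"
    and U_inv: "\<And>t x. t \<in> I \<Longrightarrow> x \<in> X \<Longrightarrow> invertible (U t x)"
  shows "pHDAE I X (\<lambda>t x. transpose (U t x) ** E t x) (\<lambda>t x. transpose (U t x) *v r t x)
      (\<lambda>t x. matrix_inv (U t x) *v z t x) (\<lambda>t x. transpose (U t x) ** J t x ** U t x)
      (\<lambda>t x. transpose (U t x) ** R t x ** U t x) (\<lambda>t x. transpose (U t x) ** B t x)
      (\<lambda>t x. transpose (U t x) ** P t x) S N H"
  unfolding pHDAE_def
proof (intro conjI ballI)
  show "continuous_on (I \<times> X) (case_prod (\<lambda>t x. matrix_inv (U t x) *v z t x))"
    using ph U_cont U_inv unfolding pHDAE_def case_prod_beta'
    by (intro continuous_on_matrix_inv_mult) auto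
next
  fix t x assume t: "t \<in> I" and x: "x \<in> X"
  have U: "invertible (U t x)" using U_inv t x .
  have struct: "(let \<Gamma> = block_mat (J t x) (B t x) (- transpose (B t x)) (N t x);
          W = block_mat (R t x) (P t x) (transpose (P t x)) (S t x)
      in transpose \<Gamma> = - \<Gamma> \<and> transpose W = W \<and> psd_mat W)"
    and dH: "(case_prod H has_derivative (\<lambda>(dt, dx). dt * (z t x \<bullet> r t x) + (transpose (E t x) *v z t x) \<bullet> dx))
      (at (t, x) within I \<times> X)"
    using ph t x unfolding pHDAE_def by blast+
  from struct show "let \<Gamma> = block_mat (transpose (U t x) ** J t x ** U t x) (transpose (U t x) ** B t x)
              (- transpose (transpose (U t x) ** B t x)) (N t x);
          W = block_mat (transpose (U t x) ** R t x ** U t x) (transpose (U t x) ** P t x)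
              (transpose (transpose (U t x) ** P t x)) (S t x)
      in transpose \<Gamma> = - \<Gamma> \<and> transpose W = W \<and> psd_mat W"
    by (rule pH_structure_congruence)
  show "(case_prod H has_derivative (\<lambda>(dt, dx). dt * ((matrix_inv (U t x) *v z t x) \<bullet> (transpose (U t x) *v r t x))
        + (transpose (transpose (U t x) ** E t x) *v (matrix_inv (U t x) *v z t x)) \<bullet> dx))
      (at (t, x) within I \<times> X)"
    using dH by (simp only: inner_matrix_inv_transpose[OF U] transpose_congruence_matrix_inv[OF U])
qed (use ph U_cont in \<open>unfold pHDAE_def case_prod_beta',
      auto simp del: transpose_matrix_vector intro!: continuous_on_matrix_mult
        continuous_on_matrix_vector_mult continuous_on_transpose\<close>)

lemma is_solution_congruence_iff:
  fixes U :: "real \<Rightarrow> real^'n \<Rightarrow> real^'l^'l"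
  assumes U_inv: "\<And>t x. t \<in> I \<Longrightarrow> x \<in> X \<Longrightarrow> invertible (U t x)"
  shows "is_solution I X (\<lambda>t x. transpose (U t x) ** E t x) (\<lambda>t x. transpose (U t x) *v r t x)
      (\<lambda>t x. matrix_inv (U t x) *v z t x) (\<lambda>t x. transpose (U t x) ** J t x ** U t x)
      (\<lambda>t x. transpose (U t x) ** R t x ** U t x) (\<lambda>t x. transpose (U t x) ** B t x)
      (\<lambda>t x. transpose (U t x) ** P t x) S N x u y
    \<longleftrightarrow> is_solution I X E r z J R B P S N x u y"
proof -
  have output_eq: "transpose (transpose (U t v) ** B t v + transpose (U t v) ** P t v) *v (matrix_inv (U t v) *v z t v)
      = transpose (B t v + P t v) *v z t v" if "t \<in> I" "v \<in> X" for t v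
    using transpose_congruence_matrix_inv[OF U_inv[OF that]] by (simp only: matrix_add_ldistrib[symmetric])
  show ?thesis
    unfolding is_solution_def
    by (intro ex_cong1 ball_cong refl conj_cong) (simp_all only: congruence_dae_iff U_inv output_eq)
qed

section \<open>Implicit curves\<close>

lemma has_derivative_slice_snd:
  assumes "(f has_derivative D) (at (t, w) within S \<times> T)" "t \<in> S"
  shows "((\<lambda>v. f (t, v)) has_derivative (\<lambda>v. D (0, v))) (at w within T)"
proof -
  have "((\<lambda>v. (t, v)) has_derivative (\<lambda>v. (0, v))) (at w within T)"
    by (auto intro!: derivative_eq_intros)
  moreover have "(f has_derivative D) (at (t, w) within (\<lambda>v. (t, v)) ` T)"
    by (rule has_derivative_subset[OF assms(1)]) (use assms(2) in auto)
  ultimately show ?thesis by (rule has_derivative_in_compose)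
qed

lemma has_derivative_slice_fst:
  assumes "(f has_derivative D) (at (t, w) within S \<times> T)" "w \<in> T"
  shows "((\<lambda>s. f (s, w)) has_derivative (\<lambda>h. D (h, 0))) (at t within S)"
proof -
  have "((\<lambda>s. (s, w)) has_derivative (\<lambda>h. (h, 0))) (at t within S)"
    by (auto intro!: derivative_eq_intros)
  moreover have "(f has_derivative D) (at (t, w) within (\<lambda>s. (s, w)) ` S)"
    by (rule has_derivative_subset[OF assms(1)]) (use assms(2) in auto)
  ultimately show ?thesis by (rule has_derivative_in_compose)
qed

lemma has_derivative_partial_snd:
  fixes \<phi> :: "real \<Rightarrow> real^'k \<Rightarrow> real^'n"
  assumes "(case_prod \<phi> has_derivative (\<lambda>(h, v). h *\<^sub>R f + A *v v)) (at (t, w) within I \<times> Xt)"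
    and "t \<in> I" "w \<in> Xt" "open Xt"
  shows "(\<phi> t has_derivative (\<lambda>v. A *v v)) (at w)"
proof -
  have "((\<lambda>v. case_prod \<phi> (t, v)) has_derivative (\<lambda>v. (\<lambda>(h, v). h *\<^sub>R f + A *v v) (0, v))) (at w within Xt)"
    by (rule has_derivative_slice_snd[OF assms(1,2)])
  then show ?thesis by (simp add: at_within_open[OF assms(3,4)])
qed

text \<open>Differentiating \<open>g \<circ> f = id\<close> and \<open>f \<circ> g = id\<close> for a local inverse \<open>g\<close>.\<close>
lemma local_diffeo_on_derivative_invertible:
  fixes f :: "real^'n \<Rightarrow> real^'m" and A :: "real^'n^'m"
  assumes "local_diffeo_on f X Y" "w \<in> X" "(f has_derivative (\<lambda>v. A *v v)) (at w)"
  shows "invertible A"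
proof -
  obtain V W g where V: "open V" "w \<in> V" and W: "open W" "f ` V = W"
    and gf: "\<forall>v\<in>V. g (f v) = v" and fg: "\<forall>y\<in>W. f (g y) = y" and "C1_on g W"
    using assms(1,2) unfolding local_diffeo_on_def by blast
  then obtain G where G: "\<forall>y\<in>W. (g has_derivative blinfun_apply (G y)) (at y)"
    unfolding C1_on_def by blast
  have fw: "f w \<in> W" using V W by auto
  have dg: "(g has_derivative blinfun_apply (G (f w))) (at (f w))" using G fw by blast
  have "((\<lambda>v. g (f v)) has_derivative (\<lambda>v. G (f w) (A *v v))) (at w)"
    by (rule has_derivative_compose[OF assms(3) dg])
  then have "((\<lambda>v. v) has_derivative (\<lambda>v. G (f w) (A *v v))) (at w)"
    by (rule has_derivative_transform_within_open[OF _ V]) (use gf in auto)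
  then have left: "blinfun_apply (G (f w)) \<circ> (*v) A = id"
    using has_derivative_unique[OF _ has_derivative_ident] by (auto simp: fun_eq_iff)
  have "(f has_derivative (\<lambda>v. A *v v)) (at (g (f w)))" using assms(3) gf V by simp
  then have "((\<lambda>y. f (g y)) has_derivative (\<lambda>y. A *v G (f w) y)) (at (f w))"
    by (rule has_derivative_compose[OF dg])
  then have "((\<lambda>y. y) has_derivative (\<lambda>y. A *v G (f w) y)) (at (f w))"
    by (rule has_derivative_transform_within_open[OF _ W(1) fw]) (use fg in auto)
  then have right: "(*v) A \<circ> blinfun_apply (G (f w)) = id"
    using has_derivative_unique[OF _ has_derivative_ident] by (auto simp: fun_eq_iff)
  show ?thesis
    using matrix_invertible[OF matrix_vector_mul_linear, of A] left right
      bounded_linear.linear[OF blinfun.bounded_linear_right] by auto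
qed

lemma has_derivative_lipschitz_at:
  fixes f :: "real \<Rightarrow> 'b::real_normed_vector"
  assumes "(f has_derivative (\<lambda>h. h *\<^sub>R f')) (at t within I)"
  obtains C d where "C > 0" "d > 0" "\<And>s. s \<in> I \<Longrightarrow> \<bar>s - t\<bar> < d \<Longrightarrow> norm (f s - f t) \<le> C * \<bar>s - t\<bar>"
proof -
  obtain d where d: "d > 0"
    "\<forall>s\<in>I. norm (s - t) < d \<longrightarrow> norm (f s - f t - (s - t) *\<^sub>R f') \<le> 1 * norm (s - t)"
    using assms[unfolded has_derivative_within_alt] by (meson zero_less_one)
  have "norm (f s - f t) \<le> (norm f' + 1) * \<bar>s - t\<bar>" if "s \<in> I" "\<bar>s - t\<bar> < d" for s
  proof -
    have "norm (f s - f t) \<le> norm (f s - f t - (s - t) *\<^sub>R f') + norm ((s - t) *\<^sub>R f')"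
      by (metis diff_add_cancel norm_triangle_ineq)
    also have "\<dots> \<le> \<bar>s - t\<bar> + \<bar>s - t\<bar> * norm f'"
      using d(2) that by auto
    finally show ?thesis by (simp add: algebra_simps)
  qed
  moreover have "norm f' + 1 > 0" by (simp add: add_nonneg_pos)
  ultimately show ?thesis using d(1) that by blast
qed

lemma dist_Pair_le: "dist (a, b) (c, d) \<le> dist a c + dist b d"
  unfolding dist_Pair_Pair by (rule real_sqrt_sum_squares_triangle_ineq[of "dist a c" 0 0 "dist b d", simplified])

lemma onorm_matrix_vector_mult_le_norm:
  fixes A :: "real^'n^'m"
  shows "onorm ((*v) A) \<le> real CARD('m) * real CARD('n) * norm A"
proof (rule onorm_le_matrix_component)
  fix i j
  have "\<bar>A $ i $ j\<bar> \<le> norm (A $ i)" by (rule component_le_norm_cart)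
  also have "\<dots> \<le> norm A" by (rule Finite_Cartesian_Product.norm_nth_le)
  finally show "\<bar>A $ i $ j\<bar> \<le> norm A" .
qed

lemma Banach_fix_cball:
  fixes G :: "'a::banach \<Rightarrow> 'a"
  assumes contr: "\<And>w1 w2. w1 \<in> cball a \<rho> \<Longrightarrow> w2 \<in> cball a \<rho> \<Longrightarrow> dist (G w1) (G w2) \<le> dist w1 w2 / 2"
    and start: "dist (G a) a \<le> \<rho> / 2"
  obtains w where "w \<in> cball a \<rho>" "G w = w" "dist w a \<le> 2 * dist (G a) a"
proof -
  have "0 \<le> \<rho>" using start zero_le_dist[of "G a" a] by linarith
  then have a: "a \<in> cball a \<rho>" by simp
  have maps: "G ` cball a \<rho> \<subseteq> cball a \<rho>"
  proof
    fix y assume "y \<in> G ` cball a \<rho>"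
    then obtain w where w: "w \<in> cball a \<rho>" and y: "y = G w" by blast
    have "dist a (G w) \<le> dist (G a) a + dist (G w) (G a)"
      by (metis dist_commute dist_triangle)
    also have "\<dots> \<le> \<rho>"
      using contr[OF w a] start w by (simp add: dist_commute)
    finally show "y \<in> cball a \<rho>" using y by simp
  qed
  have "\<exists>!w\<in>cball a \<rho>. G w = w"
  proof (rule Banach_fix[of "cball a \<rho>" "1/2" G])
    show "complete (cball a \<rho>)" by (simp add: complete_eq_closed)
  qed (use a maps contr in auto)
  then obtain w where w: "w \<in> cball a \<rho>" "G w = w" by blast
  have "dist w a \<le> dist (G w) (G a) + dist (G a) a"
    using w(2) dist_triangle by metis
  then have "dist w a \<le> 2 * dist (G a) a"
    using contr[OF w(1) a] by linarith
  with w that show ?thesis by blast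
qed

lemma newton_fixed_point:
  fixes F :: "real^'k \<Rightarrow> real^'n"
  assumes L: "A ** L = mat 1"
    and contr: "\<And>w1 w2. w1 \<in> cball a \<rho> \<Longrightarrow> w2 \<in> cball a \<rho> \<Longrightarrow>
      norm (w1 - w2 - L *v (F w1 - F w2)) \<le> norm (w1 - w2) / 2"
    and start: "norm (L *v (F a - y)) \<le> \<rho> / 2"
  obtains w where "w \<in> cball a \<rho>" "F w = y" "norm (w - a) \<le> 2 * norm (L *v (F a - y))"
proof -
  define G where "G w = w - L *v (F w - y)" for w
  obtain w where w: "w \<in> cball a \<rho>" "G w = w" "dist w a \<le> 2 * dist (G a) a"
  proof (rule Banach_fix_cball)
    show "dist (G w1) (G w2) \<le> dist w1 w2 / 2" if "w1 \<in> cball a \<rho>" "w2 \<in> cball a \<rho>" for w1 w2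
      using contr[OF that] by (simp add: G_def dist_norm matrix_vector_mult_diff_distrib algebra_simps)
    show "dist (G a) a \<le> \<rho> / 2" using start by (simp add: G_def dist_norm)
  qed
  have "F w - y = A *v (L *v (F w - y))"
    by (simp add: matrix_vector_mul_assoc L)
  then have "F w = y" using w(2) by (simp add: G_def)
  with w that show ?thesis by (simp add: G_def dist_norm)
qed

lemma onorm_newton_defect_le:
  fixes L :: "real^'n^'k" and A M :: "real^'k^'n"
  assumes "L ** A = mat 1"
  shows "onorm (\<lambda>v. v - L *v (M *v v)) \<le> onorm ((*v) L) * (real CARD('n) * real CARD('k) * norm (A - M))"
proof (rule onorm_le)
  fix v
  have L_pos: "0 \<le> onorm ((*v) L)" by (rule onorm_pos_le[OF matrix_vector_mul_bounded_linear])
  have "v - L *v (M *v v) = L *v ((A - M) *v v)"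
    using assms by (simp add: matrix_vector_mult_diff_rdistrib matrix_vector_mult_diff_distrib
        matrix_vector_mul_assoc)
  also have "norm \<dots> \<le> onorm ((*v) L) * norm ((A - M) *v v)"
    by (rule onorm[OF matrix_vector_mul_bounded_linear])
  also have "\<dots> \<le> onorm ((*v) L) * (onorm ((*v) (A - M)) * norm v)"
    by (intro mult_left_mono onorm[OF matrix_vector_mul_bounded_linear] L_pos)
  also have "\<dots> \<le> onorm ((*v) L) * (real CARD('n) * real CARD('k) * norm (A - M) * norm v)"
    by (intro mult_left_mono mult_right_mono onorm_matrix_vector_mult_le_norm L_pos norm_ge_zero)
  finally show "norm (v - L *v (M *v v)) \<le> onorm ((*v) L) * (real CARD('n) * real CARD('k) * norm (A - M)) * norm v"
    by (simp add: ac_simps)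
qed

text \<open>\<open>w \<mapsto> w - L \<phi>(s, w)\<close> is the simplified Newton map of \<open>\<phi>(s, \<cdot>)\<close> at \<open>(t\<^sub>0, a)\<close>.\<close>
lemma newton_map_contraction:
  fixes \<phi> :: "real \<Rightarrow> real^'k \<Rightarrow> real^'n" and \<phi>x :: "real \<Rightarrow> real^'k \<Rightarrow> real^'k^'n"
  assumes Xt: "open Xt" and t0: "t0 \<in> I" and a: "a \<in> Xt"
    and deriv: "\<And>s w. s \<in> I \<Longrightarrow> w \<in> Xt \<Longrightarrow> (\<phi> s has_derivative (\<lambda>v. \<phi>x s w *v v)) (at w)"
    and cont: "continuous_on (I \<times> Xt) (case_prod \<phi>x)"
    and L: "L ** \<phi>x t0 a = mat 1"
  obtains \<rho> \<delta> where "\<rho> > 0" "\<delta> > 0" "cball a \<rho> \<subseteq> Xt"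
    "\<And>s w1 w2. s \<in> I \<Longrightarrow> \<bar>s - t0\<bar> < \<delta> \<Longrightarrow> w1 \<in> cball a \<rho> \<Longrightarrow> w2 \<in> cball a \<rho> \<Longrightarrow>
      norm (w1 - w2 - L *v (\<phi> s w1 - \<phi> s w2)) \<le> norm (w1 - w2) / 2"
proof -
  define K where "K = onorm ((*v) L) * (real CARD('n) * real CARD('k)) + 1"
  have K: "K > 0"
    unfolding K_def using onorm_pos_le[OF matrix_vector_mul_bounded_linear[of L]] by (simp add: add_nonneg_pos)
  have "(t0, a) \<in> I \<times> Xt" "1 / (2 * K) > 0" using t0 a K by simp_all
  then have "\<exists>\<delta>>0. \<forall>p\<in>I \<times> Xt. dist p (t0, a) < \<delta> \<longrightarrow> dist (case_prod \<phi>x p) (\<phi>x t0 a) < 1 / (2 * K)"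
    using cont[unfolded continuous_on_iff] by simp
  then obtain \<delta> where \<delta>: "\<delta> > 0"
    and near: "\<forall>p\<in>I \<times> Xt. dist p (t0, a) < \<delta> \<longrightarrow> dist (case_prod \<phi>x p) (\<phi>x t0 a) < 1 / (2 * K)"
    by blast
  obtain r where r: "r > 0" "cball a r \<subseteq> Xt" using open_contains_cball Xt a by blast
  define \<rho> where "\<rho> = min r (\<delta> / 2)"
  have \<rho>: "\<rho> > 0" "cball a \<rho> \<subseteq> Xt" using r \<delta> by (auto simp: \<rho>_def)
  have "norm ((w1 - L *v \<phi> s w1) - (w2 - L *v \<phi> s w2)) \<le> 1/2 * norm (w1 - w2)"
    if s: "s \<in> I" "\<bar>s - t0\<bar> < \<delta> / 2" and w: "w1 \<in> cball a \<rho>" "w2 \<in> cball a \<rho>" for s w1 w2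
  proof (rule differentiable_bound[of "cball a \<rho>" _ "\<lambda>w v. v - L *v (\<phi>x s w *v v)"])
    fix w assume w: "w \<in> cball a \<rho>"
    then have wX: "w \<in> Xt" using \<rho> by blast
    have "((\<lambda>w. L *v \<phi> s w) has_derivative (\<lambda>v. L *v (\<phi>x s w *v v))) (at w)"
      using deriv[OF s(1) wX] by (rule bounded_linear.has_derivative[OF matrix_vector_mul_bounded_linear])
    then show "((\<lambda>w. w - L *v \<phi> s w) has_derivative (\<lambda>v. v - L *v (\<phi>x s w *v v))) (at w within cball a \<rho>)"
      by (rule has_derivative_at_withinI[OF has_derivative_diff[OF has_derivative_ident]])
    have "dist (s, w) (t0, a) \<le> dist s t0 + dist w a" by (rule dist_Pair_le)
    also have "\<dots> < \<delta>" using s w unfolding \<rho>_def by (auto simp: dist_real_def dist_commute)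
    finally have "dist (case_prod \<phi>x (s, w)) (\<phi>x t0 a) < 1 / (2 * K)"
      using near s(1) wX by blast
    then have "norm (\<phi>x t0 a - \<phi>x s w) \<le> 1 / (2 * K)"
      by (simp add: dist_norm norm_minus_commute)
    have "onorm (\<lambda>v. v - L *v (\<phi>x s w *v v)) \<le> (K - 1) * norm (\<phi>x t0 a - \<phi>x s w)"
      using onorm_newton_defect_le[OF L, of "\<phi>x s w"] by (simp add: K_def mult.assoc)
    also have "\<dots> \<le> K * (1 / (2 * K))"
      using \<open>norm (\<phi>x t0 a - \<phi>x s w) \<le> 1 / (2 * K)\<close> K
      by (smt (verit) mult_mono norm_ge_zero)
    finally show "onorm (\<lambda>v. v - L *v (\<phi>x s w *v v)) \<le> 1/2" using K by simp
  qed (use w in simp_all)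
  then show ?thesis
    using that[OF \<rho>(1) half_gt_zero[OF \<delta>] \<rho>(2)] by (simp add: algebra_simps matrix_vector_mult_diff_distrib)
qed

lemma local_solution_lipschitz:
  fixes \<phi> :: "real \<Rightarrow> real^'k \<Rightarrow> real^'n" and \<phi>x :: "real \<Rightarrow> real^'k \<Rightarrow> real^'k^'n"
  assumes Xt: "open Xt" and t0: "t0 \<in> I" and a: "a \<in> Xt"
    and deriv: "\<And>s w. s \<in> I \<Longrightarrow> w \<in> Xt \<Longrightarrow>
      (case_prod \<phi> has_derivative (\<lambda>(h, v). h *\<^sub>R \<phi>t s w + \<phi>x s w *v v)) (at (s, w) within I \<times> Xt)"
    and cont: "continuous_on (I \<times> Xt) (case_prod \<phi>x)"
    and inv: "invertible (\<phi>x t0 a)"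
    and x: "(x has_vector_derivative x') (at t0 within I)"
    and start: "\<phi> t0 a = x t0"
  obtains C \<delta> where "C \<ge> 0" "\<delta> > 0"
    "\<And>s. s \<in> I \<Longrightarrow> \<bar>s - t0\<bar> < \<delta> \<Longrightarrow> \<exists>w\<in>Xt. \<phi> s w = x s \<and> norm (w - a) \<le> C * \<bar>s - t0\<bar>"
proof -
  define L where "L = matrix_inv (\<phi>x t0 a)"
  have slice: "(\<phi> s has_derivative (\<lambda>v. \<phi>x s w *v v)) (at w)" if "s \<in> I" "w \<in> Xt" for s w
    using has_derivative_partial_snd[OF deriv[OF that] that Xt] .
  obtain \<rho> \<delta>1 where \<rho>: "\<rho> > 0" and \<delta>1: "\<delta>1 > 0" and ball: "cball a \<rho> \<subseteq> Xt"
    and contr: "\<And>s w1 w2. s \<in> I \<Longrightarrow> \<bar>s - t0\<bar> < \<delta>1 \<Longrightarrow> w1 \<in> cball a \<rho> \<Longrightarrow> w2 \<in> cball a \<rho> \<Longrightarrow>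
      norm (w1 - w2 - L *v (\<phi> s w1 - \<phi> s w2)) \<le> norm (w1 - w2) / 2"
    using newton_map_contraction[OF Xt t0 a slice cont matrix_inv_left[OF inv], folded L_def] by metis
  obtain K where K: "K > 0" "\<And>y. norm (L *v y) \<le> norm y * K"
    using bounded_linear.pos_bounded[OF matrix_vector_mul_bounded_linear[of L]] by blast
  have "((\<lambda>s. \<phi> s a) has_derivative (\<lambda>k. k *\<^sub>R \<phi>t t0 a)) (at t0 within I)"
    using has_derivative_slice_fst[OF deriv[OF t0 a] a] by simp
  then have "((\<lambda>s. \<phi> s a - x s) has_derivative (\<lambda>k. k *\<^sub>R (\<phi>t t0 a - x'))) (at t0 within I)"
    using has_derivative_diff x unfolding has_vector_derivative_def by (fastforce simp: scaleR_diff_right)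
  then obtain C1 d where C1: "C1 > 0" "d > 0" and lip: "\<And>s. s \<in> I \<Longrightarrow> \<bar>s - t0\<bar> < d \<Longrightarrow>
      norm ((\<phi> s a - x s) - (\<phi> t0 a - x t0)) \<le> C1 * \<bar>s - t0\<bar>"
    by (rule has_derivative_lipschitz_at) blast
  have defect: "norm (\<phi> s a - x s) \<le> C1 * \<bar>s - t0\<bar>" if "s \<in> I" "\<bar>s - t0\<bar> < d" for s
    using lip[OF that] start by simp
  define \<delta> where "\<delta> = min \<delta>1 (min d (\<rho> / (2 * K * C1)))"
  have "\<exists>w\<in>Xt. \<phi> s w = x s \<and> norm (w - a) \<le> (2 * K * C1) * \<bar>s - t0\<bar>"
    if s: "s \<in> I" "\<bar>s - t0\<bar> < \<delta>" for s
  proof -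
    have s1: "\<bar>s - t0\<bar> < \<delta>1" using s(2) by (simp add: \<delta>_def)
    have "norm (L *v (\<phi> s a - x s)) \<le> norm (\<phi> s a - x s) * K" by (rule K(2))
    also have "\<dots> \<le> C1 * \<bar>s - t0\<bar> * K"
      using defect[OF s(1)] s(2) K(1) by (intro mult_right_mono) (auto simp: \<delta>_def)
    finally have start: "norm (L *v (\<phi> s a - x s)) \<le> C1 * \<bar>s - t0\<bar> * K" .
    also have "C1 * \<bar>s - t0\<bar> * K \<le> \<rho> / 2"
      using s(2) K C1 by (simp add: \<delta>_def field_simps)
    finally have "norm (L *v (\<phi> s a - x s)) \<le> \<rho> / 2" .
    then obtain w where w: "w \<in> cball a \<rho>" "\<phi> s w = x s" "norm (w - a) \<le> 2 * norm (L *v (\<phi> s a - x s))"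
      using newton_fixed_point[OF matrix_inv_right[OF inv, folded L_def] contr[OF s(1) s1]] by blast
    have "norm (w - a) \<le> 2 * K * C1 * \<bar>s - t0\<bar>"
      using w(3) start by (simp add: algebra_simps)
    then show ?thesis using w(1,2) ball by blast
  qed
  moreover have "\<delta> > 0" using \<delta>1 C1 \<rho> K by (simp add: \<delta>_def)
  moreover have "2 * K * C1 \<ge> 0" using K C1 by simp
  ultimately show ?thesis using that by blast
qed

lemma has_derivative_remainder_along_curve:
  fixes F :: "real \<times> 'a::real_normed_vector \<Rightarrow> 'b::real_normed_vector"
  assumes F: "(F has_derivative D) (at (t0, a) within I \<times> X)"
    and curve: "\<And>s. s \<in> I \<Longrightarrow> c s \<in> X" "c t0 = a"
    and lip: "C \<ge> 0" "\<delta> > 0" "\<And>s. s \<in> I \<Longrightarrow> \<bar>s - t0\<bar> < \<delta> \<Longrightarrow> norm (c s - a) \<le> C * \<bar>s - t0\<bar>"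
  shows "((\<lambda>s. F (s, c s) - F (t0, a) - D (s - t0, c s - a)) has_derivative (\<lambda>_. 0)) (at t0 within I)"
  unfolding has_derivative_within_alt
proof (intro conjI allI impI)
  show "bounded_linear (\<lambda>_::real. 0::'b)" by (rule bounded_linear_zero)
  have D0: "D (0, 0) = 0"
    using has_derivative_bounded_linear[OF F] by (simp add: linear_simps zero_prod_def[symmetric])
  fix e :: real assume "e > 0"
  then have "e / (1 + C) > 0" using lip(1) by simp
  then obtain d1 where d1: "d1 > 0" "\<forall>p\<in>I \<times> X. norm (p - (t0, a)) < d1 \<longrightarrow>
      norm (F p - F (t0, a) - D (p - (t0, a))) \<le> e / (1 + C) * norm (p - (t0, a))"
    using F[unfolded has_derivative_within_alt] by blast
  define d where "d = min \<delta> (d1 / (1 + C))"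
  have "norm (F (s, c s) - F (t0, a) - D (s - t0, c s - a) - (F (t0, c t0) - F (t0, a) - D (t0 - t0, c t0 - a)) - 0)
      \<le> e * norm (s - t0)" if s: "s \<in> I" "norm (s - t0) < d" for s
  proof -
    have "norm ((s, c s) - (t0, a)) \<le> dist s t0 + dist (c s) a"
      using dist_Pair_le[of s "c s" t0 a] by (simp add: dist_norm)
    also have "\<dots> \<le> (1 + C) * \<bar>s - t0\<bar>"
      using lip(3)[OF s(1)] s(2) by (simp add: d_def dist_norm dist_real_def algebra_simps)
    finally have near: "norm ((s, c s) - (t0, a)) \<le> (1 + C) * \<bar>s - t0\<bar>" .
    also have "\<dots> < d1" using s(2) lip(1) by (simp add: d_def field_simps)
    finally have "norm (F (s, c s) - F (t0, a) - D ((s, c s) - (t0, a))) \<le> e / (1 + C) * norm ((s, c s) - (t0, a))"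
      using d1(2) s(1) curve(1) by blast
    also have "\<dots> \<le> e / (1 + C) * ((1 + C) * \<bar>s - t0\<bar>)"
      using near \<open>e / (1 + C) > 0\<close> by (intro mult_left_mono) auto
    also have "\<dots> = e * norm (s - t0)" using lip(1) by simp
    finally show ?thesis using curve(2) D0 by simp
  qed
  moreover have "d > 0" using lip d1 by (simp add: d_def)
  ultimately show "\<exists>d>0. \<forall>s\<in>I. norm (s - t0) < d \<longrightarrow> norm (F (s, c s) - F (t0, a) - D (s - t0, c s - a)
      - (F (t0, c t0) - F (t0, a) - D (t0 - t0, c t0 - a)) - 0) \<le> e * norm (s - t0)"
    by blast
qed

text \<open>Up to the remainder of \<open>\<phi>\<close> along the curve, which is \<open>o(|s - t\<^sub>0|)\<close> because \<open>x\<^sub>t\<close> is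
  Lipschitz at \<open>t\<^sub>0\<close>, \<open>A (x\<^sub>t(s) - x\<^sub>t(t\<^sub>0))\<close> equals the increment of \<open>x(s) - (s - t\<^sub>0) f\<close>.\<close>
lemma has_vector_derivative_implicit_curve:
  fixes \<phi> :: "real \<Rightarrow> real^'k \<Rightarrow> real^'n" and A :: "real^'k^'n"
  assumes t0: "t0 \<in> I"
    and deriv: "(case_prod \<phi> has_derivative (\<lambda>(h, v). h *\<^sub>R f + A *v v)) (at (t0, xt t0) within I \<times> Xt)"
    and inv: "invertible A"
    and curve: "\<And>s. s \<in> I \<Longrightarrow> xt s \<in> Xt" "\<And>s. s \<in> I \<Longrightarrow> \<phi> s (xt s) = x s"
    and lip: "C \<ge> 0" "\<delta> > 0" "\<And>s. s \<in> I \<Longrightarrow> \<bar>s - t0\<bar> < \<delta> \<Longrightarrow> norm (xt s - xt t0) \<le> C * \<bar>s - t0\<bar>"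
    and x: "(x has_vector_derivative x') (at t0 within I)"
  shows "(xt has_vector_derivative matrix_inv A *v (x' - f)) (at t0 within I)"
proof -
  define a where "a = xt t0"
  have rem: "((\<lambda>s. \<phi> s (xt s) - \<phi> t0 a - ((s - t0) *\<^sub>R f + A *v (xt s - a))) has_derivative (\<lambda>_. 0))
      (at t0 within I)"
    using has_derivative_remainder_along_curve[OF deriv curve(1) refl lip] by (simp add: a_def)
  have "((\<lambda>s. x s - x t0 - (s - t0) *\<^sub>R f) has_derivative (\<lambda>k. k *\<^sub>R (x' - f))) (at t0 within I)"
    using x unfolding has_vector_derivative_def by (auto intro!: derivative_eq_intros simp: scaleR_diff_right)
  from has_derivative_diff[OF this rem]
  have "((\<lambda>s. (x s - x t0 - (s - t0) *\<^sub>R f) - (\<phi> s (xt s) - \<phi> t0 a - ((s - t0) *\<^sub>R f + A *v (xt s - a))))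
      has_derivative (\<lambda>k. k *\<^sub>R (x' - f))) (at t0 within I)"
    by simp
  then have "((\<lambda>s. A *v (xt s - a)) has_derivative (\<lambda>k. k *\<^sub>R (x' - f))) (at t0 within I)"
    by (rule has_derivative_transform[rotated 2]) (use t0 curve(2) in \<open>auto simp: a_def\<close>)
  then have "((\<lambda>s. matrix_inv A *v (A *v (xt s - a))) has_derivative (\<lambda>k. matrix_inv A *v (k *\<^sub>R (x' - f))))
      (at t0 within I)"
    by (rule bounded_linear.has_derivative[OF matrix_vector_mul_bounded_linear])
  then have "((\<lambda>s. (xt s - a) + a) has_derivative (\<lambda>k. k *\<^sub>R (matrix_inv A *v (x' - f)))) (at t0 within I)"
    by (intro has_derivative_add_const) (simp add: matrix_inv_cancel_left[OF inv] matrix_vector_mult_scaleR)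
  then show ?thesis by (simp add: has_vector_derivative_def)
qed

lemma has_vector_derivative_preimage_curve:
  fixes \<phi> :: "real \<Rightarrow> real^'k \<Rightarrow> real^'n" and \<phi>x :: "real \<Rightarrow> real^'k \<Rightarrow> real^'k^'n"
  assumes Xt: "open Xt" and t0: "t0 \<in> I"
    and deriv: "\<And>s w. s \<in> I \<Longrightarrow> w \<in> Xt \<Longrightarrow>
      (case_prod \<phi> has_derivative (\<lambda>(h, v). h *\<^sub>R \<phi>t s w + \<phi>x s w *v v)) (at (s, w) within I \<times> Xt)"
    and cont: "continuous_on (I \<times> Xt) (case_prod \<phi>x)"
    and inv: "invertible (\<phi>x t0 (xt t0))"
    and inj: "\<And>s. s \<in> I \<Longrightarrow> inj_on (\<phi> s) Xt"
    and curve: "\<And>s. s \<in> I \<Longrightarrow> xt s \<in> Xt" "\<And>s. s \<in> I \<Longrightarrow> \<phi> s (xt s) = x s"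
    and x: "(x has_vector_derivative x') (at t0 within I)"
  shows "(xt has_vector_derivative matrix_inv (\<phi>x t0 (xt t0)) *v (x' - \<phi>t t0 (xt t0))) (at t0 within I)"
proof -
  obtain C \<delta> where C: "C \<ge> 0" "\<delta> > 0"
    and sol: "\<And>s. s \<in> I \<Longrightarrow> \<bar>s - t0\<bar> < \<delta> \<Longrightarrow> \<exists>w\<in>Xt. \<phi> s w = x s \<and> norm (w - xt t0) \<le> C * \<bar>s - t0\<bar>"
    using local_solution_lipschitz[OF Xt t0 curve(1)[OF t0] deriv cont inv x curve(2)[OF t0]] by blast
  have "norm (xt s - xt t0) \<le> C * \<bar>s - t0\<bar>" if "s \<in> I" "\<bar>s - t0\<bar> < \<delta>" for s
    using sol[OF that] inj[OF that(1)] curve[OF that(1)] by (metis inj_onD)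
  with C show ?thesis
    by (intro has_vector_derivative_implicit_curve[OF t0 deriv[OF t0 curve(1)[OF t0]] inv curve _ _ _ x])
qed

section \<open>Change of state variables\<close>

lemma has_derivative_graph_compose:
  assumes H: "(case_prod H has_derivative DH) (at (t, \<phi> t w) within S \<times> X)"
    and \<phi>: "(case_prod \<phi> has_derivative D\<phi>) (at (t, w) within S \<times> W)"
    and maps: "\<And>s v. s \<in> S \<Longrightarrow> v \<in> W \<Longrightarrow> \<phi> s v \<in> X"
  shows "(case_prod (\<lambda>s v. H s (\<phi> s v)) has_derivative (\<lambda>q. DH (fst q, D\<phi> q))) (at (t, w) within S \<times> W)"
proof -
  let ?graph = "\<lambda>p. (fst p, case_prod \<phi> p)"
  have "(?graph has_derivative (\<lambda>q. (fst q, D\<phi> q))) (at (t, w) within S \<times> W)"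
    by (intro has_derivative_Pair has_derivative_fst[OF has_derivative_ident] \<phi>)
  moreover have "?graph ` (S \<times> W) \<subseteq> S \<times> X" using maps by auto
  then have "(case_prod H has_derivative DH) (at (?graph (t, w)) within ?graph ` (S \<times> W))"
    using has_derivative_subset[OF H] by simp
  ultimately have "((\<lambda>p. case_prod H (?graph p)) has_derivative (\<lambda>q. DH (fst q, D\<phi> q))) (at (t, w) within S \<times> W)"
    by (rule has_derivative_in_compose)
  then show ?thesis by (simp add: case_prod_beta')
qed

lemma has_vector_derivative_compose_curve:
  fixes \<phi> :: "real \<Rightarrow> real^'k \<Rightarrow> real^'n"
  assumes \<phi>: "(case_prod \<phi> has_derivative (\<lambda>(h, v). h *\<^sub>R f + A *v v)) (at (t, xt t) within I \<times> Xt)"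
    and curve: "\<And>s. s \<in> I \<Longrightarrow> xt s \<in> Xt"
    and xt: "(xt has_vector_derivative xt') (at t within I)"
  shows "((\<lambda>s. \<phi> s (xt s)) has_vector_derivative f + A *v xt') (at t within I)"
proof -
  have "((\<lambda>s. (s, xt s)) has_derivative (\<lambda>h. (h, h *\<^sub>R xt'))) (at t within I)"
    using xt by (auto intro!: has_derivative_Pair has_derivative_ident simp: has_vector_derivative_def)
  moreover have "(\<lambda>s. (s, xt s)) ` I \<subseteq> I \<times> Xt" using curve by auto
  then have "(case_prod \<phi> has_derivative (\<lambda>(h, v). h *\<^sub>R f + A *v v)) (at (t, xt t) within (\<lambda>s. (s, xt s)) ` I)"
    by (rule has_derivative_subset[OF \<phi>])
  ultimately have "((\<lambda>s. \<phi> s (xt s)) has_derivative (\<lambda>h. h *\<^sub>R f + A *v (h *\<^sub>R xt'))) (at t within I)"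
    using has_derivative_in_compose by fastforce
  then show ?thesis
    by (simp add: has_vector_derivative_def matrix_vector_mult_scaleR scaleR_right_distrib)
qed

lemma pullback_derivative_eq:
  fixes E :: "real^'n^'l" and F :: "real^'k^'n"
  shows "h * (z \<bullet> r) + (transpose E *v z) \<bullet> (h *\<^sub>R f + F *v v)
    = h * (z \<bullet> (r + E *v f)) + (transpose (E ** F) *v z) \<bullet> v"
proof -
  have "(transpose E *v z) \<bullet> f = z \<bullet> (E *v f)"
    by (metis inner_transpose_mult transpose_transpose inner_commute)
  moreover have "(transpose E *v z) \<bullet> (F *v v) = (transpose (E ** F) *v z) \<bullet> v"
    by (metis inner_transpose_mult inner_commute matrix_transpose_mul matrix_vector_mul_assoc)
  ultimately show ?thesis by (simp add: inner_add_right distrib_left)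
qed

lemma pHDAE_pullback:
  fixes \<phi> :: "real \<Rightarrow> real^'k \<Rightarrow> real^'n"
  assumes ph: "pHDAE I X E r z J R B P S N H"
    and maps: "\<And>t w. t \<in> I \<Longrightarrow> w \<in> Xt \<Longrightarrow> \<phi> t w \<in> X"
    and deriv: "\<And>t w. t \<in> I \<Longrightarrow> w \<in> Xt \<Longrightarrow>
      (case_prod \<phi> has_derivative (\<lambda>(h, v). h *\<^sub>R \<phi>t t w + \<phi>x t w *v v)) (at (t, w) within I \<times> Xt)"
    and \<phi>t_cont: "continuous_on (I \<times> Xt) (case_prod \<phi>t)"
    and \<phi>x_cont: "continuous_on (I \<times> Xt) (case_prod \<phi>x)"
  shows "pHDAE I Xt (\<lambda>t w. E t (\<phi> t w) ** \<phi>x t w) (\<lambda>t w. r t (\<phi> t w) + E t (\<phi> t w) *v \<phi>t t w)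
      (\<lambda>t w. z t (\<phi> t w)) (\<lambda>t w. J t (\<phi> t w)) (\<lambda>t w. R t (\<phi> t w)) (\<lambda>t w. B t (\<phi> t w))
      (\<lambda>t w. P t (\<phi> t w)) (\<lambda>t w. S t (\<phi> t w)) (\<lambda>t w. N t (\<phi> t w)) (\<lambda>t w. H t (\<phi> t w))"
proof -
  have "continuous_on (I \<times> Xt) (case_prod \<phi>)"
    unfolding continuous_on_eq_continuous_within using has_derivative_continuous[OF deriv] by auto
  then have graph_cont: "continuous_on (I \<times> Xt) (\<lambda>p. (fst p, \<phi> (fst p) (snd p)))"
    by (auto intro!: continuous_intros simp: case_prod_beta')
  have cont: "continuous_on (I \<times> Xt) (\<lambda>p. F (fst p) (\<phi> (fst p) (snd p)))"
    if "continuous_on (I \<times> X) (\<lambda>p. F (fst p) (snd p))" for F :: "real \<Rightarrow> real^'n \<Rightarrow> 'c::topological_space"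
  proof -
    have "(\<lambda>p. (fst p, \<phi> (fst p) (snd p))) ` (I \<times> Xt) \<subseteq> I \<times> X" using maps by auto
    then show ?thesis using continuous_on_compose2[OF that graph_cont] by simp
  qed
  show ?thesis
    unfolding pHDAE_def
  proof (intro conjI ballI)
    fix t w assume t: "t \<in> I" and w: "w \<in> Xt"
    have "(case_prod H has_derivative (\<lambda>(dt, dx). dt * (z t (\<phi> t w) \<bullet> r t (\<phi> t w))
        + (transpose (E t (\<phi> t w)) *v z t (\<phi> t w)) \<bullet> dx)) (at (t, \<phi> t w) within I \<times> X)"
      using ph t maps[OF t w] unfolding pHDAE_def by blast
    from has_derivative_graph_compose[OF this deriv[OF t w] maps]
    show "(case_prod (\<lambda>t w. H t (\<phi> t w)) has_derivative (\<lambda>(dt, dx). dt * (z t (\<phi> t w) \<bullet> (r t (\<phi> t w)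
        + E t (\<phi> t w) *v \<phi>t t w)) + (transpose (E t (\<phi> t w) ** \<phi>x t w) *v z t (\<phi> t w)) \<bullet> dx))
      (at (t, w) within I \<times> Xt)"
      by (simp del: transpose_matrix_vector add: case_prod_beta' pullback_derivative_eq)
    show "let \<Gamma> = block_mat (J t (\<phi> t w)) (B t (\<phi> t w)) (- transpose (B t (\<phi> t w))) (N t (\<phi> t w));
        W = block_mat (R t (\<phi> t w)) (P t (\<phi> t w)) (transpose (P t (\<phi> t w))) (S t (\<phi> t w))
      in transpose \<Gamma> = - \<Gamma> \<and> transpose W = W \<and> psd_mat W"
      using ph t maps[OF t w] unfolding pHDAE_def by blast
  qed (use ph \<phi>t_cont \<phi>x_cont in \<open>unfold pHDAE_def case_prod_beta',
      auto simp del: transpose_matrix_vector intro!: cont continuous_intros continuous_on_matrix_mult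
        continuous_on_matrix_vector_mult\<close>)
qed

lemma pullback_dae_lhs_eq:
  fixes E :: "real^'n^'l" and F :: "real^'k^'n"
  shows "E *v (f + F *v w) + r = (E ** F) *v w + (r + E *v f)"
  by (simp add: matrix_vector_right_distrib matrix_vector_mul_assoc algebra_simps)

lemma is_solution_pullback:
  fixes \<phi> :: "real \<Rightarrow> real^'k \<Rightarrow> real^'n"
  assumes maps: "\<And>t w. t \<in> I \<Longrightarrow> w \<in> Xt \<Longrightarrow> \<phi> t w \<in> X"
    and deriv: "\<And>t w. t \<in> I \<Longrightarrow> w \<in> Xt \<Longrightarrow>
      (case_prod \<phi> has_derivative (\<lambda>(h, v). h *\<^sub>R \<phi>t t w + \<phi>x t w *v v)) (at (t, w) within I \<times> Xt)"
    and sol: "is_solution I Xt (\<lambda>t w. E t (\<phi> t w) ** \<phi>x t w) (\<lambda>t w. r t (\<phi> t w) + E t (\<phi> t w) *v \<phi>t t w)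
      (\<lambda>t w. z t (\<phi> t w)) (\<lambda>t w. J t (\<phi> t w)) (\<lambda>t w. R t (\<phi> t w)) (\<lambda>t w. B t (\<phi> t w))
      (\<lambda>t w. P t (\<phi> t w)) (\<lambda>t w. S t (\<phi> t w)) (\<lambda>t w. N t (\<phi> t w)) xt u y"
  shows "is_solution I X E r z J R B P S N (\<lambda>t. \<phi> t (xt t)) u y"
proof -
  from sol obtain xt' where xt: "\<And>t. t \<in> I \<Longrightarrow> xt t \<in> Xt"
    and dxt: "\<And>t. t \<in> I \<Longrightarrow> (xt has_vector_derivative xt' t) (at t within I)"
    and dae: "\<And>t. t \<in> I \<Longrightarrow> (E t (\<phi> t (xt t)) ** \<phi>x t (xt t)) *v xt' t + (r t (\<phi> t (xt t)) + E t (\<phi> t (xt t)) *v \<phi>t t (xt t))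
      = (J t (\<phi> t (xt t)) - R t (\<phi> t (xt t))) *v z t (\<phi> t (xt t)) + (B t (\<phi> t (xt t)) - P t (\<phi> t (xt t))) *v u t"
    and out: "\<And>t. t \<in> I \<Longrightarrow> y t = transpose (B t (\<phi> t (xt t)) + P t (\<phi> t (xt t))) *v z t (\<phi> t (xt t))
      + (S t (\<phi> t (xt t)) - N t (\<phi> t (xt t))) *v u t"
    unfolding is_solution_def by blast
  show ?thesis
    unfolding is_solution_def
  proof (intro exI[of _ "\<lambda>t. \<phi>t t (xt t) + \<phi>x t (xt t) *v xt' t"] ballI conjI)
    fix t assume t: "t \<in> I"
    show "\<phi> t (xt t) \<in> X" using maps[OF t xt[OF t]] .
    show "((\<lambda>t. \<phi> t (xt t)) has_vector_derivative \<phi>t t (xt t) + \<phi>x t (xt t) *v xt' t) (at t within I)"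
      by (rule has_vector_derivative_compose_curve[OF deriv[OF t xt[OF t]] xt dxt[OF t]])
    show "E t (\<phi> t (xt t)) *v (\<phi>t t (xt t) + \<phi>x t (xt t) *v xt' t) + r t (\<phi> t (xt t))
      = (J t (\<phi> t (xt t)) - R t (\<phi> t (xt t))) *v z t (\<phi> t (xt t)) + (B t (\<phi> t (xt t)) - P t (\<phi> t (xt t))) *v u t"
      using dae[OF t] by (simp only: pullback_dae_lhs_eq)
  qed (use out in blast)
qed

text \<open>No continuity in \<open>t\<close> of the inverses of \<open>\<phi>(t, \<cdot>)\<close> is assumed: the differentiability of the
  lifted curve comes from the implicit function argument above.\<close>
lemma differentiable_curve_lift:
  fixes \<phi> :: "real \<Rightarrow> real^'k \<Rightarrow> real^'n"
  assumes Xt: "open Xt"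
    and deriv: "\<And>t w. t \<in> I \<Longrightarrow> w \<in> Xt \<Longrightarrow>
      (case_prod \<phi> has_derivative (\<lambda>(h, v). h *\<^sub>R \<phi>t t w + \<phi>x t w *v v)) (at (t, w) within I \<times> Xt)"
    and \<phi>x_cont: "continuous_on (I \<times> Xt) (case_prod \<phi>x)"
    and loc: "\<And>t. t \<in> I \<Longrightarrow> local_diffeo_on (\<phi> t) Xt X"
    and bij: "\<And>t. t \<in> I \<Longrightarrow> bij_betw (\<phi> t) Xt X"
    and x: "\<And>t. t \<in> I \<Longrightarrow> x t \<in> X" "\<And>t. t \<in> I \<Longrightarrow> (x has_vector_derivative x' t) (at t within I)"
  obtains xt xt' where "\<And>t. t \<in> I \<Longrightarrow> xt t \<in> Xt" "\<And>t. t \<in> I \<Longrightarrow> \<phi> t (xt t) = x t"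
    "\<And>t. t \<in> I \<Longrightarrow> (xt has_vector_derivative xt' t) (at t within I)"
    "\<And>t. t \<in> I \<Longrightarrow> \<phi>t t (xt t) + \<phi>x t (xt t) *v xt' t = x' t"
proof
  define xt where "xt t = inv_into Xt (\<phi> t) (x t)" for t
  show xt: "xt t \<in> Xt" and x_eq: "\<phi> t (xt t) = x t" if "t \<in> I" for t
    using x(1)[OF that] bij[OF that] unfolding xt_def bij_betw_def by (auto intro: inv_into_into f_inv_into_f)
  have inv: "invertible (\<phi>x t (xt t))" if "t \<in> I" for t
    using local_diffeo_on_derivative_invertible[OF loc[OF that] xt[OF that]]
      has_derivative_partial_snd[OF deriv[OF that xt[OF that]] that xt[OF that] Xt] by blast
  define xt' where "xt' t = matrix_inv (\<phi>x t (xt t)) *v (x' t - \<phi>t t (xt t))" for t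
  show "(xt has_vector_derivative xt' t) (at t within I)" if "t \<in> I" for t
    unfolding xt'_def
    using has_vector_derivative_preimage_curve[OF Xt that deriv \<phi>x_cont inv[OF that] _ xt x_eq x(2)[OF that]]
      bij_betw_imp_inj_on[OF bij] by blast
  show "\<phi>t t (xt t) + \<phi>x t (xt t) *v xt' t = x' t" if "t \<in> I" for t
    by (simp add: xt'_def matrix_inv_cancel_right[OF inv[OF that]])
qed

lemma is_solution_pushforward:
  fixes \<phi> :: "real \<Rightarrow> real^'k \<Rightarrow> real^'n"
  assumes Xt: "open Xt"
    and deriv: "\<And>t w. t \<in> I \<Longrightarrow> w \<in> Xt \<Longrightarrow>
      (case_prod \<phi> has_derivative (\<lambda>(h, v). h *\<^sub>R \<phi>t t w + \<phi>x t w *v v)) (at (t, w) within I \<times> Xt)"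
    and \<phi>x_cont: "continuous_on (I \<times> Xt) (case_prod \<phi>x)"
    and loc: "\<And>t. t \<in> I \<Longrightarrow> local_diffeo_on (\<phi> t) Xt X"
    and bij: "\<And>t. t \<in> I \<Longrightarrow> bij_betw (\<phi> t) Xt X"
    and sol: "is_solution I X E r z J R B P S N x u y"
  shows "\<exists>xt. is_solution I Xt (\<lambda>t w. E t (\<phi> t w) ** \<phi>x t w) (\<lambda>t w. r t (\<phi> t w) + E t (\<phi> t w) *v \<phi>t t w)
      (\<lambda>t w. z t (\<phi> t w)) (\<lambda>t w. J t (\<phi> t w)) (\<lambda>t w. R t (\<phi> t w)) (\<lambda>t w. B t (\<phi> t w))
      (\<lambda>t w. P t (\<phi> t w)) (\<lambda>t w. S t (\<phi> t w)) (\<lambda>t w. N t (\<phi> t w)) xt u y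
    \<and> (\<forall>t\<in>I. x t = \<phi> t (xt t))"
proof -
  from sol obtain x' where x: "\<And>t. t \<in> I \<Longrightarrow> x t \<in> X"
    and dx: "\<And>t. t \<in> I \<Longrightarrow> (x has_vector_derivative x' t) (at t within I)"
    and dae: "\<And>t. t \<in> I \<Longrightarrow> E t (x t) *v x' t + r t (x t) = (J t (x t) - R t (x t)) *v z t (x t) + (B t (x t) - P t (x t)) *v u t"
    and out: "\<And>t. t \<in> I \<Longrightarrow> y t = transpose (B t (x t) + P t (x t)) *v z t (x t) + (S t (x t) - N t (x t)) *v u t"
    unfolding is_solution_def by blast
  obtain xt xt' where xt: "\<And>t. t \<in> I \<Longrightarrow> xt t \<in> Xt" and x_eq: "\<And>t. t \<in> I \<Longrightarrow> \<phi> t (xt t) = x t"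
    and dxt: "\<And>t. t \<in> I \<Longrightarrow> (xt has_vector_derivative xt' t) (at t within I)"
    and x'_eq: "\<And>t. t \<in> I \<Longrightarrow> \<phi>t t (xt t) + \<phi>x t (xt t) *v xt' t = x' t"
    using differentiable_curve_lift[OF Xt deriv \<phi>x_cont loc bij x dx] by blast
  have "is_solution I Xt (\<lambda>t w. E t (\<phi> t w) ** \<phi>x t w) (\<lambda>t w. r t (\<phi> t w) + E t (\<phi> t w) *v \<phi>t t w)
      (\<lambda>t w. z t (\<phi> t w)) (\<lambda>t w. J t (\<phi> t w)) (\<lambda>t w. R t (\<phi> t w)) (\<lambda>t w. B t (\<phi> t w))
      (\<lambda>t w. P t (\<phi> t w)) (\<lambda>t w. S t (\<phi> t w)) (\<lambda>t w. N t (\<phi> t w)) xt u y"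
    unfolding is_solution_def
  proof (intro exI[of _ xt'] ballI conjI xt dxt)
    fix t assume t: "t \<in> I"
    show "(E t (\<phi> t (xt t)) ** \<phi>x t (xt t)) *v xt' t + (r t (\<phi> t (xt t)) + E t (\<phi> t (xt t)) *v \<phi>t t (xt t))
      = (J t (\<phi> t (xt t)) - R t (\<phi> t (xt t))) *v z t (\<phi> t (xt t)) + (B t (\<phi> t (xt t)) - P t (\<phi> t (xt t))) *v u t"
      using dae[OF t] by (simp only: pullback_dae_lhs_eq[symmetric] x'_eq[OF t] x_eq[OF t])
    show "y t = transpose (B t (\<phi> t (xt t)) + P t (\<phi> t (xt t))) *v z t (\<phi> t (xt t))
      + (S t (\<phi> t (xt t)) - N t (\<phi> t (xt t))) *v u t"
      using out[OF t] by (simp only: x_eq[OF t])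
  qed
  moreover have "\<forall>t\<in>I. x t = \<phi> t (xt t)" using x_eq by simp
  ultimately show ?thesis by blast
qed

theorem theorem2:
  fixes I :: "real set" and X :: "(real^'n) set" and Xt :: "(real^'nt) set"
    and E :: "real \<Rightarrow> real^'n \<Rightarrow> real^'n^'l" and r z :: "real \<Rightarrow> real^'n \<Rightarrow> real^'l"
    and J R :: "real \<Rightarrow> real^'n \<Rightarrow> real^'l^'l" and B P :: "real \<Rightarrow> real^'n \<Rightarrow> real^'m^'l"
    and S N :: "real \<Rightarrow> real^'n \<Rightarrow> real^'m^'m" and H :: "real \<Rightarrow> real^'n \<Rightarrow> real"
    and \<phi> :: "real \<Rightarrow> real^'nt \<Rightarrow> real^'n"
    and \<phi>t :: "real \<Rightarrow> real^'nt \<Rightarrow> real^'n" and \<phi>x :: "real \<Rightarrow> real^'nt \<Rightarrow> real^'nt^'n"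
    and U :: "real \<Rightarrow> real^'nt \<Rightarrow> real^'l^'l"
  assumes I: "is_interval I"
    and X: "open X" and Xt: "open Xt"
    and ph: "pHDAE I X E r z J R B P S N H"
    and phi_maps: "\<And>t xt. t \<in> I \<Longrightarrow> xt \<in> Xt \<Longrightarrow> \<phi> t xt \<in> X"
    and phi_deriv: "\<And>t xt. t \<in> I \<Longrightarrow> xt \<in> Xt \<Longrightarrow>
        (case_prod \<phi> has_derivative (\<lambda>(s, v). s *\<^sub>R \<phi>t t xt + \<phi>x t xt *v v)) (at (t, xt) within I \<times> Xt)"
    and phi_C1: "continuous_on (I \<times> Xt) (case_prod \<phi>t)" "continuous_on (I \<times> Xt) (case_prod \<phi>x)"
    and phi_loc: "\<And>t. t \<in> I \<Longrightarrow> local_diffeo_on (\<phi> t) Xt X"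
    and U_cont: "continuous_on (I \<times> Xt) (case_prod U)"
    and U_inv: "\<And>t xt. t \<in> I \<Longrightarrow> xt \<in> Xt \<Longrightarrow> invertible (U t xt)"
  defines "Et \<equiv> \<lambda>t xt. transpose (U t xt) ** E t (\<phi> t xt) ** \<phi>x t xt"
    and "Jt \<equiv> \<lambda>t xt. transpose (U t xt) ** J t (\<phi> t xt) ** U t xt"
    and "Rt \<equiv> \<lambda>t xt. transpose (U t xt) ** R t (\<phi> t xt) ** U t xt"
    and "Bt \<equiv> \<lambda>t xt. transpose (U t xt) ** B t (\<phi> t xt)"
    and "Pt \<equiv> \<lambda>t xt. transpose (U t xt) ** P t (\<phi> t xt)"
    and "zt \<equiv> \<lambda>t xt. matrix_inv (U t xt) *v z t (\<phi> t xt)"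
    and "rt \<equiv> \<lambda>t xt. transpose (U t xt) *v (r t (\<phi> t xt) + E t (\<phi> t xt) *v \<phi>t t xt)"
    and "St \<equiv> \<lambda>t xt. S t (\<phi> t xt)"
    and "Nt \<equiv> \<lambda>t xt. N t (\<phi> t xt)"
    and "Ht \<equiv> \<lambda>t xt. H t (\<phi> t xt)"
  shows "pHDAE I Xt Et rt zt Jt Rt Bt Pt St Nt Ht
    \<and> (\<forall>xt u y. is_solution I Xt Et rt zt Jt Rt Bt Pt St Nt xt u y \<longrightarrow>
          is_solution I X E r z J R B P S N (\<lambda>t. \<phi> t (xt t)) u y)
    \<and> ((\<forall>t\<in>I. diffeo_on (\<phi> t) Xt X) \<longrightarrow>
        (\<forall>x u y. is_solution I X E r z J R B P S N x u y \<longrightarrow>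
           (\<exists>xt. is_solution I Xt Et rt zt Jt Rt Bt Pt St Nt xt u y \<and> (\<forall>t\<in>I. x t = \<phi> t (xt t))))
        \<and> (\<forall>xt1 xt2 u y. is_solution I Xt Et rt zt Jt Rt Bt Pt St Nt xt1 u y \<longrightarrow>
              is_solution I Xt Et rt zt Jt Rt Bt Pt St Nt xt2 u y \<longrightarrow>
              (\<forall>t\<in>I. \<phi> t (xt1 t) = \<phi> t (xt2 t)) \<longrightarrow> (\<forall>t\<in>I. xt1 t = xt2 t)))"
proof -
  have Et_eq: "Et = (\<lambda>t xt. transpose (U t xt) ** (E t (\<phi> t xt) ** \<phi>x t xt))"
    unfolding Et_def by (simp add: matrix_mul_assoc)
  note transformed_defs = Et_eq rt_def zt_def Jt_def Rt_def Bt_def Pt_def St_def Nt_def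
  have sol_iff: "is_solution I Xt Et rt zt Jt Rt Bt Pt St Nt xt u y \<longleftrightarrow>
      is_solution I Xt (\<lambda>t w. E t (\<phi> t w) ** \<phi>x t w) (\<lambda>t w. r t (\<phi> t w) + E t (\<phi> t w) *v \<phi>t t w)
        (\<lambda>t w. z t (\<phi> t w)) (\<lambda>t w. J t (\<phi> t w)) (\<lambda>t w. R t (\<phi> t w)) (\<lambda>t w. B t (\<phi> t w))
        (\<lambda>t w. P t (\<phi> t w)) (\<lambda>t w. S t (\<phi> t w)) (\<lambda>t w. N t (\<phi> t w)) xt u y" for xt u y
    unfolding transformed_defs by (rule is_solution_congruence_iff[OF U_inv])
  have "pHDAE I Xt Et rt zt Jt Rt Bt Pt St Nt Ht"
    unfolding transformed_defs Ht_def
    by (rule pHDAE_congruence[OF pHDAE_pullback[OF ph phi_maps phi_deriv phi_C1] U_cont U_inv])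
  moreover have "is_solution I X E r z J R B P S N (\<lambda>t. \<phi> t (xt t)) u y"
    if "is_solution I Xt Et rt zt Jt Rt Bt Pt St Nt xt u y" for xt u y
    using is_solution_pullback[OF phi_maps phi_deriv] that sol_iff by blast
  moreover have "\<exists>xt. is_solution I Xt Et rt zt Jt Rt Bt Pt St Nt xt u y \<and> (\<forall>t\<in>I. x t = \<phi> t (xt t))"
    if "\<forall>t\<in>I. diffeo_on (\<phi> t) Xt X" "is_solution I X E r z J R B P S N x u y" for x u y
    using is_solution_pushforward[OF Xt phi_deriv phi_C1(2) phi_loc _ that(2)] that(1) sol_iff
    unfolding diffeo_on_def by blast
  moreover have "xt1 t = xt2 t"
    if "\<forall>t\<in>I. diffeo_on (\<phi> t) Xt X" "is_solution I Xt Et rt zt Jt Rt Bt Pt St Nt xt1 u y"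
      "is_solution I Xt Et rt zt Jt Rt Bt Pt St Nt xt2 u y" "\<phi> t (xt1 t) = \<phi> t (xt2 t)" "t \<in> I"
    for xt1 xt2 u y t
    using that unfolding diffeo_on_def bij_betw_def is_solution_def by (meson inj_onD)
  ultimately show ?thesis by blast
qed

end
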